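(* Let $n\in\mathbb{N}$ and let $\sigma$ be a probability distribution on $[n]$ such that $\sigma_{\le i}>\tfrac in$ for every $i\in[n-1]$, and let $\pi=\bigotimes_{i=1}^{n-1}\mathrm{Geom}\big(1-\frac{i}{n\sigma_{\le i}}\big)$. For $(\vec d,i)\in\mathbb{N}_0^{n-1}\times[n]$ let $\nu(\vec d,i)$ be the probability that the transitional state $(\vec d,i)$ occurs during one transition according to $P$ started from $\vec d_{\mathrm{start}}\sim\pi$. Then \[\nu(\vec d,i)=\pi(\vec d)\cdot\sigma_{\le i}\quad\text{for all }(\vec d,i)\in\mathbb{N}_0^{n-1}\times[n].\]
   Context: For a probability distribution $\sigma$ on $[n]$ write $\sigma_i=\Pr_{i^*\sim\sigma}[i^*=i]$ and $\sigma_{\le i}=\Pr_{i^*\sim\sigma}[i^*\le i]$. $\mathrm{Geom}(p)$ is the number of failed independent Bernoulli($p$) trials before the first success (support $\mathbb{N}_0$); $\bigotimes$ is the product of independent distributions, and $\pi(\vec d)$ is the probability mass at $\vec d$. Let $\vec e_i$ be the $i$-th unit vector in $\mathbb{N}_0^{n-1}$ for $i\in[n-1]$, with conventions $d_n=\infty$, $\vec e_n=\vec0$. A transition according to $P$ from a state $\vec d_{\mathrm{start}}\in\mathbb{N}_0^{n-1}$ passes through transitional states $(\vec d,i)\in\mathbb{N}_0^{n-1}\times[n]$: (1) sample $i^*\sim\sigma$ and go to $(\vec d_{\mathrm{start}},i^* )$. (2) While in $(\vec d,i)$: if $d_i>0$, then with probability $(i-1)/i$ move to $(\vec d-\vec e_i+\vec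 e_{i-1},i)$ and with probability $1/i$ end the transition in state $\vec d-\vec e_i$; if $d_i=0$, move to $(\vec d,i+1)$. *)

theory Defs
  imports "HOL-Probability.Probability"
begin

text \<open>States d in N0^(n-1) are encoded as functions nat => nat, with
  coordinates 1..n-1 meaningful (all other coordinates 0 for the stationary
  distribution). Transitional states (d,i) are Trans d i; the end of a
  transition in state d is Final d (absorbing).\<close>

datatype tstate = Trans "nat \<Rightarrow> nat" nat | Final "nat \<Rightarrow> nat"

definition sig_le :: "nat pmf \<Rightarrow> nat \<Rightarrow> real" where
  "sig_le \<sigma> i = measure_pmf.prob \<sigma> {..i}"

definition geom_param :: "nat \<Rightarrow> nat pmf \<Rightarrow> nat \<Rightarrow> real" where
  "geom_param n \<sigma> i = 1 - real i / (real n * sig_le \<sigma> i)"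

definition pi_dist :: "nat \<Rightarrow> nat pmf \<Rightarrow> (nat \<Rightarrow> nat) pmf" where
  "pi_dist n \<sigma> = Pi_pmf {1..<n} 0 (\<lambda>i. geometric_pmf (geom_param n \<sigma> i))"

text \<open>One step between transitional states (d_n = infinity, e_n = 0).\<close>
definition step :: "nat \<Rightarrow> tstate \<Rightarrow> tstate pmf" where
  "step n s = (case s of
      Final d \<Rightarrow> return_pmf (Final d)
    | Trans d i \<Rightarrow>
        (if i = n then
           map_pmf (\<lambda>b. if b then Final d else Trans (d(n - 1 := Suc (d (n - 1)))) n)
             (bernoulli_pmf (1 / real i))
         else if d i > 0 then
           map_pmf (\<lambda>b. if b then Final (d(i := d i - 1))
                         else Trans ((d(i := d i - 1))(i - 1 := Suc (d (i - 1)))) i)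
             (bernoulli_pmf (1 / real i))
         else return_pmf (Trans d (Suc i))))"

definition init_dist :: "nat \<Rightarrow> nat pmf \<Rightarrow> tstate pmf" where
  "init_dist n \<sigma> = bind_pmf (pi_dist n \<sigma>) (\<lambda>d. map_pmf (Trans d) \<sigma>)"

primrec path_dist :: "nat \<Rightarrow> nat pmf \<Rightarrow> nat \<Rightarrow> tstate list pmf" where
  "path_dist n \<sigma> 0 = map_pmf (\<lambda>x. [x]) (init_dist n \<sigma>)"
| "path_dist n \<sigma> (Suc k) =
     bind_pmf (path_dist n \<sigma> k) (\<lambda>xs. map_pmf (\<lambda>y. xs @ [y]) (step n (last xs)))"

text \<open>nu(d,i): probability that the transitional state (d,i) occurs during the
  transition, i.e. the limit (supremum) of the probabilities of the increasing
  events "(d,i) occurs among the first k+1 states".\<close>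
definition nu :: "nat \<Rightarrow> nat pmf \<Rightarrow> (nat \<Rightarrow> nat) \<Rightarrow> nat \<Rightarrow> real" where
  "nu n \<sigma> d i = (SUP k. measure_pmf.prob (path_dist n \<sigma> k) {xs. Trans d i \<in> set xs})"

end

theory Submission
  imports Defs
begin

text \<open>Along one transition the transitional states strictly increase in the order that
  compares the index i first and then d_i (decreasing; for i = n, d_(n-1) increasing). So no
  state is visited twice, and \<nu>(d,i) is the expected number of visits, the sum over t of
  Pr[X_t = (d,i)]. For i \<ge> 2 the state (d,i) has a single possible predecessor: (d, i-1),
  followed by (d,i) with probability 1, if d_(i-1) = 0, and otherwise (d - e_(i-1) + e_i, i),
  followed by (d,i) with probability 1 - 1/i. This gives \<nu>(d,i) = \<pi>(d) \<sigma>_i + \<nu>(d, i-1),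
  resp. \<nu>(d,i) = \<pi>(d) \<sigma>_i + (1 - 1/i) \<nu>(d - e_(i-1) + e_i, i). With r_j = j / (n \<sigma>_\<le>j)
  the product measure satisfies \<pi>(d + e_j) = r_j \<pi>(d), and r_j \<sigma>_\<le>j = j/n; hence
  \<pi>(d) \<sigma>_\<le>i solves the recursion, and induction on i and then on d_(i-1) shows that it
  equals \<nu>.\<close>

lemma pmf_map_bernoulli_pmf_other:
  assumes "x \<noteq> a" "0 \<le> p" "p \<le> 1"
  shows "pmf (map_pmf (\<lambda>b. if b then a else c) (bernoulli_pmf p)) x = (if x = c then 1 - p else 0)"
proof -
  have "(\<lambda>b. if b then a else c) -` {x} = (if x = c then {False} else {})"
    using assms(1) by (auto split: if_splits)
  then show ?thesis
    using assms(2,3) by (simp add: pmf_map measure_pmf_single)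
qed

lemma pmf_bind_pmf_single_source:
  assumes "\<And>y. y \<in> set_pmf M \<Longrightarrow> pmf (K y) x = w * indicator {z} y"
  shows "pmf (bind_pmf M K) x = w * pmf M z"
proof -
  have "pmf (bind_pmf M K) x = measure_pmf.expectation M (\<lambda>y. w * indicator {z} y)"
    unfolding pmf_bind by (rule integral_cong_AE) (auto simp: AE_measure_pmf_iff assms)
  then show ?thesis
    by (simp add: measure_pmf_single)
qed

lemma last_notin_set_butlast:
  assumes "sorted_wrt R xs" "xs \<noteq> []" "\<not> R (last xs) (last xs)"
  shows "last xs \<notin> set (butlast xs)"
proof -
  have "sorted_wrt R (butlast xs @ [last xs])"
    using assms(1,2) by simp
  then show ?thesis
    using assms(3) by (auto simp: sorted_wrt_append)
qed

lemma prob_mem_eq_prob_mem_butlast_plus_last: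
  fixes M :: "'a list pmf"
  assumes "\<And>xs. xs \<in> set_pmf M \<Longrightarrow> xs \<noteq> [] \<and> (last xs = s \<longrightarrow> s \<notin> set (butlast xs))"
  shows "measure_pmf.prob M {xs. s \<in> set xs} =
    measure_pmf.prob (map_pmf butlast M) {xs. s \<in> set xs} + pmf (map_pmf last M) s"
proof -
  let ?A = "{xs. s \<in> set (butlast xs)} \<inter> set_pmf M" and ?B = "{xs. last xs = s} \<inter> set_pmf M"
  have "set xs = insert (last xs) (set (butlast xs))" if "xs \<noteq> []" for xs :: "'a list"
    using that by (induction xs) auto
  then have "{xs. s \<in> set xs} \<inter> set_pmf M = ?A \<union> ?B"
    using assms by auto
  moreover have "?A \<inter> ?B = {}"
    using assms by auto
  ultimately have "measure_pmf.prob M {xs. s \<in> set xs} = measure_pmf.prob M ?A + measure_pmf.prob M ?B"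
    by (metis measure_Int_set_pmf measure_pmf.finite_measure_Union sets_measure_pmf UNIV_I)
  then show ?thesis
    by (simp add: measure_Int_set_pmf pmf_map vimage_def)
qed

lemma SUP_partial_sums_Suc_eq_suminf:
  fixes X :: "nat \<Rightarrow> real"
  assumes "summable X" "\<And>n. 0 \<le> X n"
  shows "(SUP k. \<Sum>n<Suc k. X n) = suminf X"
proof (rule LIMSEQ_unique)
  show "(\<lambda>k. \<Sum>n<Suc k. X n) \<longlonglongrightarrow> (SUP k. \<Sum>n<Suc k. X n)"
    by (rule LIMSEQ_incseq_SUP)
      (auto intro!: bdd_aboveI2[where M="suminf X"] sum_le_suminf assms incseq_SucI
        simp del: sum.lessThan_Suc simp: sum.lessThan_Suc[of _ "Suc _"])
  show "(\<lambda>k. \<Sum>n<Suc k. X n) \<longlonglongrightarrow> suminf X"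
    using LIMSEQ_Suc[OF summable_LIMSEQ[OF assms(1)]] .
qed

lemma pmf_Pi_pmf_fun_upd:
  assumes "finite A" "a \<in> A"
  shows "pmf (Pi_pmf A dflt p) (f(a := v)) * pmf (p a) (f a) = pmf (Pi_pmf A dflt p) f * pmf (p a) v"
proof (cases "\<forall>x. x \<notin> A \<longrightarrow> f x = dflt")
  case True
  then have "\<forall>x. x \<notin> A \<longrightarrow> (f(a := v)) x = dflt"
    using assms(2) by auto
  then have "pmf (Pi_pmf A dflt p) (f(a := v)) = pmf (p a) v * (\<Prod>x\<in>A - {a}. pmf (p x) (f x))"
    using assms by (simp add: pmf_Pi' prod.remove)
  moreover have "pmf (Pi_pmf A dflt p) f = pmf (p a) (f a) * (\<Prod>x\<in>A - {a}. pmf (p x) (f x))"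
    using True assms by (simp add: pmf_Pi' prod.remove)
  ultimately show ?thesis
    by simp
next
  case False
  then show ?thesis
    using assms by (auto simp: pmf_Pi)
qed

text \<open>pass_down n d i = d - e_i + e_(i-1) is the state in which a transition continues from
  (d,i), and pass_up n d i = d - e_(i-1) + e_i; both use the convention e_n = 0.\<close>

definition pass_down :: "nat \<Rightarrow> (nat \<Rightarrow> nat) \<Rightarrow> nat \<Rightarrow> nat \<Rightarrow> nat" where
  "pass_down n d i = (if i = n then d(n - 1 := Suc (d (n - 1)))
     else (d(i := d i - 1))(i - 1 := Suc (d (i - 1))))"

definition pass_up :: "nat \<Rightarrow> (nat \<Rightarrow> nat) \<Rightarrow> nat \<Rightarrow> nat \<Rightarrow> nat" where
  "pass_up n d i = (if i = n then d(n - 1 := d (n - 1) - 1)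
     else (d(i - 1 := d (i - 1) - 1))(i := Suc (d i)))"

lemma pass_down_eq_iff_eq_pass_up:
  assumes "2 \<le> i" "i \<le> n" "0 < d (i - 1)"
  shows "pass_down n e i = d \<and> (i = n \<or> 0 < e i) \<longleftrightarrow> e = pass_up n d i"
  using assms by (auto simp: pass_down_def pass_up_def fun_eq_iff)

lemma pass_up_at_pred: "0 < i \<Longrightarrow> pass_up n d i (i - 1) = d (i - 1) - 1"
  by (auto simp: pass_up_def)

lemma pass_down_at_pred: "pass_down n e i (i - 1) = Suc (e (i - 1))"
  by (simp add: pass_down_def)

lemma pass_up_at_index: "0 < i \<Longrightarrow> i \<noteq> n \<Longrightarrow> pass_up n d i i = Suc (d i)"
  by (simp add: pass_up_def)

lemma step_Trans:
  "step n (Trans d i) = (if i \<noteq> n \<and> d i = 0 then return_pmf (Trans d (Suc i))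
     else map_pmf (\<lambda>b. if b then Final (if i = n then d else d(i := d i - 1))
                          else Trans (pass_down n d i) i)
       (bernoulli_pmf (1 / real i)))"
  unfolding step_def pass_down_def by auto

lemma pmf_step_Trans_Trans:
  assumes "0 < j"
  shows "pmf (step n (Trans e j)) (Trans d i) =
    (if j \<noteq> n \<and> e j = 0 then of_bool (d = e \<and> i = Suc j)
     else (1 - 1 / real j) * of_bool (d = pass_down n e j \<and> i = j))"
proof (cases "j \<noteq> n \<and> e j = 0")
  case True
  then show ?thesis
    by (auto simp: step_Trans)
next
  case False
  then show ?thesis
    using assms by (auto simp: step_Trans pmf_map_bernoulli_pmf_other)
qed

fun valid_tstate :: "tstate \<Rightarrow> bool" where
  "valid_tstate (Trans _ j) = (0 < j)"
| "valid_tstate (Final _) = True"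

lemma pmf_step_into_Trans:
  assumes "valid_tstate y" "2 \<le> i" "i \<le> n"
  shows "pmf (step n y) (Trans d i) =
    (if d (i - 1) = 0 then indicator {Trans d (i - 1)} y
     else (1 - 1 / real i) * indicator {Trans (pass_up n d i) i} y)"
proof (cases y)
  case (Final e)
  then show ?thesis
    by (simp add: step_def)
next
  case (Trans e j)
  with assms(1) have "0 < j"
    by simp
  consider (right) "j \<noteq> n" "e j = 0" | (down) "j = n \<or> 0 < e j"
    by blast
  then show ?thesis
  proof cases
    case right
    then show ?thesis
      using Trans \<open>0 < j\<close> assms(2,3) pass_up_at_index[of i n d]
      by (auto simp: pmf_step_Trans_Trans indicator_def)
  next
    case down
    then have step_pmf: "pmf (step n y) (Trans d i) =
        (1 - 1 / real i) * of_bool (d = pass_down n e i \<and> i = j)"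
      using Trans \<open>0 < j\<close> by (auto simp: pmf_step_Trans_Trans)
    show ?thesis
    proof (cases "d (i - 1) = 0")
      case True
      moreover have "d \<noteq> pass_down n e i"
        using True pass_down_at_pred[of n e i] by auto
      moreover have "Trans d (i - 1) \<noteq> y"
        using Trans down True assms(2,3) by auto
      ultimately show ?thesis
        by (simp add: step_pmf)
    next
      case False
      have "d = pass_down n e i \<and> i = j \<longleftrightarrow> e = pass_up n d i \<and> i = j"
        using down pass_down_eq_iff_eq_pass_up[where d = d and e = e, OF assms(2,3)] False by auto
      then show ?thesis
        unfolding step_pmf using False Trans by (auto simp: indicator_def)
    qed
  qed
qed

lemma pmf_step_into_Trans_1:
  assumes "valid_tstate y"
  shows "pmf (step n y) (Trans d 1) = 0"
proof (cases y)
  case (Final e)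
  then show ?thesis
    by (simp add: step_def)
next
  case (Trans e j)
  then show ?thesis
    using assms by (auto simp: pmf_step_Trans_Trans)
qed

fun advances :: "nat \<Rightarrow> tstate \<Rightarrow> tstate \<Rightarrow> bool" where
  "advances n (Trans d i) (Trans d' i') =
     (i < i' \<or> i = i' \<and> (if i = n then d (n - 1) < d' (n - 1) else d' i < d i))"
| "advances n _ (Final _) = True"
| "advances n (Final _) (Trans _ _) = False"

lemma transp_advances: "transp (advances n)"
proof (rule transpI)
  fix x y z
  assume "advances n x y" "advances n y z"
  then show "advances n x z"
    by (cases x; cases y; cases z) (auto split: if_splits)
qed

lemma step_advances:
  assumes "valid_tstate x" "y \<in> set_pmf (step n x)"
  shows "valid_tstate y \<and> advances n x y"
  using assms by (cases x) (auto simp: step_def split: if_splits)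

definition state_dist :: "nat \<Rightarrow> nat pmf \<Rightarrow> nat \<Rightarrow> tstate pmf" where
  "state_dist n \<sigma> t = map_pmf last (path_dist n \<sigma> t)"

lemma state_dist_0: "state_dist n \<sigma> 0 = init_dist n \<sigma>"
  by (simp add: state_dist_def pmf.map_comp o_def)

lemma state_dist_Suc: "state_dist n \<sigma> (Suc t) = bind_pmf (state_dist n \<sigma> t) (step n)"
  by (simp add: state_dist_def map_bind_pmf bind_map_pmf pmf.map_comp o_def)

lemma map_pmf_butlast_path_dist: "map_pmf butlast (path_dist n \<sigma> (Suc k)) = path_dist n \<sigma> k"
  by (simp add: map_bind_pmf pmf.map_comp o_def bind_return_pmf' flip: return_pmf_def)

lemma path_dist_invariant:
  assumes "0 \<notin> set_pmf \<sigma>" "xs \<in> set_pmf (path_dist n \<sigma> k)"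
  shows "xs \<noteq> [] \<and> valid_tstate (last xs) \<and> successively (advances n) xs"
  using assms(2)
proof (induction k arbitrary: xs)
  case 0
  then show ?case
    using assms(1) by (auto simp: init_dist_def intro: gr0I)
next
  case (Suc k)
  then obtain ys y where ys: "ys \<in> set_pmf (path_dist n \<sigma> k)" and y: "y \<in> set_pmf (step n (last ys))"
    and xs: "xs = ys @ [y]"
    by auto
  then show ?case
    using Suc.IH[OF ys] step_advances[OF _ y] by (auto simp: successively_append_iff)
qed

lemma valid_state_dist:
  assumes "0 \<notin> set_pmf \<sigma>" "y \<in> set_pmf (state_dist n \<sigma> t)"
  shows "valid_tstate y"
  using assms path_dist_invariant[OF assms(1)] by (auto simp: state_dist_def)

lemma path_dist_no_revisit:
  assumes "0 \<notin> set_pmf \<sigma>" "xs \<in> set_pmf (path_dist n \<sigma> k)"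
  shows "xs \<noteq> [] \<and> (last xs = Trans d i \<longrightarrow> Trans d i \<notin> set (butlast xs))"
proof -
  have "xs \<noteq> []" "sorted_wrt (advances n) xs"
    using path_dist_invariant[OF assms] successively_conv_sorted_wrt[OF transp_advances] by auto
  moreover have "\<not> advances n (Trans d i) (Trans d i)"
    by simp
  ultimately show ?thesis
    using last_notin_set_butlast[of "advances n" xs] by auto
qed

lemma prob_visit_path_dist:
  assumes "0 \<notin> set_pmf \<sigma>"
  shows "measure_pmf.prob (path_dist n \<sigma> k) {xs. Trans d i \<in> set xs} =
    (\<Sum>t<Suc k. pmf (state_dist n \<sigma> t) (Trans d i))"
proof (induction k)
  case 0
  have "measure_pmf.prob (path_dist n \<sigma> 0) {xs. Trans d i \<in> set xs} =
      measure_pmf.prob (init_dist n \<sigma>) {Trans d i}"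
    by (simp add: vimage_def)
  also have "\<dots> = pmf (state_dist n \<sigma> 0) (Trans d i)"
    by (simp add: state_dist_0 measure_pmf_single)
  finally show ?case
    by simp
next
  case (Suc k)
  have "measure_pmf.prob (path_dist n \<sigma> (Suc k)) {xs. Trans d i \<in> set xs} =
      measure_pmf.prob (path_dist n \<sigma> k) {xs. Trans d i \<in> set xs} +
      pmf (state_dist n \<sigma> (Suc k)) (Trans d i)"
    unfolding state_dist_def map_pmf_butlast_path_dist[of n \<sigma> k, symmetric]
    by (rule prob_mem_eq_prob_mem_butlast_plus_last[OF path_dist_no_revisit[OF assms]])
  then show ?case
    unfolding Suc.IH by (simp only: sum.lessThan_Suc)
qed

definition occupation :: "nat \<Rightarrow> nat pmf \<Rightarrow> tstate \<Rightarrow> real" where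
  "occupation n \<sigma> s = (\<Sum>t. pmf (state_dist n \<sigma> t) s)"

lemma summable_pmf_state_dist_Trans:
  assumes "0 \<notin> set_pmf \<sigma>"
  shows "summable (\<lambda>t. pmf (state_dist n \<sigma> t) (Trans d i))"
proof (rule summableI_nonneg_bounded)
  fix k
  show "(\<Sum>t<k. pmf (state_dist n \<sigma> t) (Trans d i)) \<le> 1"
  proof (cases k)
    case (Suc m)
    then show ?thesis
      using prob_visit_path_dist[OF assms, of n m d i] measure_pmf.prob_le_1 by metis
  qed simp
qed simp

lemma nu_eq_occupation:
  assumes "0 \<notin> set_pmf \<sigma>"
  shows "nu n \<sigma> d i = occupation n \<sigma> (Trans d i)"
  unfolding nu_def occupation_def prob_visit_path_dist[OF assms]
  by (rule SUP_partial_sums_Suc_eq_suminf[OF summable_pmf_state_dist_Trans[OF assms]]) simp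

lemma pmf_state_dist_0_Trans:
  "pmf (state_dist n \<sigma> 0) (Trans d i) = pmf (pi_dist n \<sigma>) d * pmf \<sigma> i"
proof -
  have "init_dist n \<sigma> = map_pmf (\<lambda>(d, i). Trans d i) (pair_pmf (pi_dist n \<sigma>) \<sigma>)"
    by (simp add: init_dist_def pair_pmf_def map_bind_pmf bind_return_pmf map_pmf_def[symmetric]
        pmf.map_comp o_def)
  moreover have "inj (\<lambda>(d, i). Trans d i)"
    by (auto simp: inj_def)
  ultimately show ?thesis
    by (metis (no_types, lifting) pmf_map_inj' pmf_pair state_dist_0 case_prod_conv)
qed

lemma pmf_state_dist_Suc_Trans_1:
  assumes "0 \<notin> set_pmf \<sigma>"
  shows "pmf (state_dist n \<sigma> (Suc t)) (Trans d 1) = 0"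
  unfolding state_dist_Suc
  using pmf_bind_pmf_single_source[of "state_dist n \<sigma> t" "step n" "Trans d 1" 0 "Trans d 1"]
    pmf_step_into_Trans_1[OF valid_state_dist[OF assms]] by simp

lemma pmf_state_dist_Suc_Trans:
  assumes "0 \<notin> set_pmf \<sigma>" "2 \<le> i" "i \<le> n"
  shows "pmf (state_dist n \<sigma> (Suc t)) (Trans d i) =
    (if d (i - 1) = 0 then pmf (state_dist n \<sigma> t) (Trans d (i - 1))
     else (1 - 1 / real i) * pmf (state_dist n \<sigma> t) (Trans (pass_up n d i) i))"
proof -
  let ?w = "if d (i - 1) = 0 then 1 else 1 - 1 / real i"
  let ?z = "if d (i - 1) = 0 then Trans d (i - 1) else Trans (pass_up n d i) i"
  have "pmf (step n y) (Trans d i) = ?w * indicator {?z} y" if "y \<in> set_pmf (state_dist n \<sigma> t)" for y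
    using pmf_step_into_Trans[OF valid_state_dist[OF assms(1) that] assms(2,3)] by simp
  then have "pmf (bind_pmf (state_dist n \<sigma> t) (step n)) (Trans d i) = ?w * pmf (state_dist n \<sigma> t) ?z"
    by (rule pmf_bind_pmf_single_source)
  then show ?thesis
    by (simp add: state_dist_Suc)
qed

lemma occupation_unfold:
  assumes "0 \<notin> set_pmf \<sigma>"
  shows "occupation n \<sigma> (Trans d i) =
    pmf (pi_dist n \<sigma>) d * pmf \<sigma> i + (\<Sum>t. pmf (state_dist n \<sigma> (Suc t)) (Trans d i))"
  unfolding occupation_def pmf_state_dist_0_Trans[symmetric]
  using suminf_split_head[OF summable_pmf_state_dist_Trans[OF assms]] by simp

lemma occupation_Trans_1:
  assumes "0 \<notin> set_pmf \<sigma>"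
  shows "occupation n \<sigma> (Trans d 1) = pmf (pi_dist n \<sigma>) d * pmf \<sigma> 1"
  unfolding occupation_unfold[OF assms] pmf_state_dist_Suc_Trans_1[OF assms] by simp

lemma occupation_Trans:
  assumes "0 \<notin> set_pmf \<sigma>" "2 \<le> i" "i \<le> n"
  shows "occupation n \<sigma> (Trans d i) = pmf (pi_dist n \<sigma>) d * pmf \<sigma> i +
    (if d (i - 1) = 0 then occupation n \<sigma> (Trans d (i - 1))
     else (1 - 1 / real i) * occupation n \<sigma> (Trans (pass_up n d i) i))"
proof -
  have "(\<Sum>t. pmf (state_dist n \<sigma> (Suc t)) (Trans d i)) =
      (if d (i - 1) = 0 then occupation n \<sigma> (Trans d (i - 1))
       else (1 - 1 / real i) * occupation n \<sigma> (Trans (pass_up n d i) i))"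
    unfolding pmf_state_dist_Suc_Trans[OF assms] occupation_def
    using suminf_mult[OF summable_pmf_state_dist_Trans[OF assms(1)]] by simp
  then show ?thesis
    unfolding occupation_unfold[OF assms(1)] by simp
qed

lemma sig_le_Suc: "sig_le \<sigma> (Suc k) = sig_le \<sigma> k + pmf \<sigma> (Suc k)"
proof -
  have "measure_pmf.prob \<sigma> ({..k} \<union> {Suc k}) =
      measure_pmf.prob \<sigma> {..k} + measure_pmf.prob \<sigma> {Suc k}"
    by (rule measure_pmf.finite_measure_Union) auto
  moreover have "{..k} \<union> {Suc k} = {..Suc k}"
    by auto
  ultimately show ?thesis
    by (simp add: sig_le_def measure_pmf_single)
qed

locale admissible_sigma =
  fixes n :: nat and \<sigma> :: "nat pmf"
  assumes set_pmf_subset: "set_pmf \<sigma> \<subseteq> {1..n}"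
    and sig_le_gt: "\<forall>j\<in>{1..<n}. sig_le \<sigma> j > real j / real n"
begin

definition geom_ratio :: "nat \<Rightarrow> real" where
  "geom_ratio j = real j / (real n * sig_le \<sigma> j)"

lemma zero_notin_set_pmf: "0 \<notin> set_pmf \<sigma>"
  using set_pmf_subset by auto

lemma sig_le_0: "sig_le \<sigma> 0 = 0"
  using zero_notin_set_pmf by (simp add: sig_le_def measure_pmf_single set_pmf_iff)

lemma sig_le_n: "sig_le \<sigma> n = 1"
proof -
  have "AE x in measure_pmf \<sigma>. x \<in> {..n}"
    using set_pmf_subset by (auto simp: AE_measure_pmf_iff)
  then show ?thesis
    unfolding sig_le_def by (simp add: measure_pmf.prob_eq_1)
qed

lemma sig_le_pos:
  assumes "j \<in> {1..<n}"
  shows "0 < sig_le \<sigma> j"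
proof -
  have "0 < real j / real n" "real j / real n < sig_le \<sigma> j"
    using assms sig_le_gt by auto
  then show ?thesis
    by linarith
qed

lemma geom_ratio_mult_sig_le:
  assumes "j \<in> {1..<n}"
  shows "geom_ratio j * sig_le \<sigma> j = real j / real n"
  using sig_le_pos[OF assms] by (simp add: geom_ratio_def)

lemma geom_ratio_bounds:
  assumes "j \<in> {1..<n}"
  shows "0 < geom_ratio j \<and> geom_ratio j < 1"
proof -
  have "real j < real n * sig_le \<sigma> j"
    using assms sig_le_gt by (auto simp: field_simps)
  then show ?thesis
    using assms sig_le_pos[OF assms] by (simp add: geom_ratio_def field_simps)
qed

lemma pmf_pi_dist_Suc:
  assumes "a \<in> {1..<n}"
  shows "pmf (pi_dist n \<sigma>) (d(a := Suc (d a))) = geom_ratio a * pmf (pi_dist n \<sigma>) d"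
proof -
  have "geom_param n \<sigma> a = 1 - geom_ratio a"
    by (simp add: geom_param_def geom_ratio_def)
  then have "pmf (geometric_pmf (geom_param n \<sigma> a)) k = geom_ratio a ^ k * (1 - geom_ratio a)" for k
    using geom_ratio_bounds[OF assms] by simp
  then show ?thesis
    using pmf_Pi_pmf_fun_upd[of "{1..<n}" a 0 "\<lambda>j. geometric_pmf (geom_param n \<sigma> j)" d "Suc (d a)"]
      assms geom_ratio_bounds[OF assms] by (simp add: pi_dist_def)
qed

lemma pmf_pi_dist_pass_up:
  assumes i: "2 \<le> i" "i \<le> n" and pos: "0 < d (i - 1)"
  shows "(1 - 1 / real i) * pmf (pi_dist n \<sigma>) (pass_up n d i) * sig_le \<sigma> i =
    pmf (pi_dist n \<sigma>) d * sig_le \<sigma> (i - 1)"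
proof -
  define d' where "d' = d(i - 1 := d (i - 1) - 1)"
  have pred_i: "i - 1 \<in> {1..<n}"
    using i by auto
  have "d = d'(i - 1 := Suc (d' (i - 1)))"
    using pos by (auto simp: d'_def)
  then have pi_d: "pmf (pi_dist n \<sigma>) d = geom_ratio (i - 1) * pmf (pi_dist n \<sigma>) d'"
    using pmf_pi_dist_Suc[OF pred_i, of d'] by simp
  have "(1 - 1 / real i) * pmf (pi_dist n \<sigma>) (pass_up n d i) * sig_le \<sigma> i =
      real (i - 1) / real n * pmf (pi_dist n \<sigma>) d'"
  proof (cases "i = n")
    case True
    then have "pass_up n d i = d'"
      by (simp add: pass_up_def d'_def)
    then show ?thesis
      using True i sig_le_n by (simp add: field_simps of_nat_diff)
  next
    case False
    then have i_in: "i \<in> {1..<n}"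
      using i by auto
    have "pass_up n d i = d'(i := Suc (d' i))"
      using False i by (auto simp: pass_up_def d'_def)
    then have "pmf (pi_dist n \<sigma>) (pass_up n d i) = geom_ratio i * pmf (pi_dist n \<sigma>) d'"
      using pmf_pi_dist_Suc[OF i_in, of d'] by simp
    then have "(1 - 1 / real i) * pmf (pi_dist n \<sigma>) (pass_up n d i) * sig_le \<sigma> i =
        (1 - 1 / real i) * (geom_ratio i * sig_le \<sigma> i) * pmf (pi_dist n \<sigma>) d'"
      by simp
    also have "\<dots> = real (i - 1) / real n * pmf (pi_dist n \<sigma>) d'"
      unfolding geom_ratio_mult_sig_le[OF i_in] using i by (simp add: field_simps of_nat_diff)
    finally show ?thesis .
  qed
  also have "\<dots> = pmf (pi_dist n \<sigma>) d * sig_le \<sigma> (i - 1)"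
    unfolding pi_d geom_ratio_mult_sig_le[OF pred_i, symmetric] by simp
  finally show ?thesis .
qed

lemma occupation_Trans_eq:
  assumes "1 \<le> i" "i \<le> n"
  shows "occupation n \<sigma> (Trans d i) = pmf (pi_dist n \<sigma>) d * sig_le \<sigma> i"
  using assms
proof (induction i arbitrary: d)
  case 0
  then show ?case
    by simp
next
  case (Suc k)
  show ?case
  proof (cases "k = 0")
    case True
    then show ?thesis
      using occupation_Trans_1[OF zero_notin_set_pmf] sig_le_Suc[of \<sigma> 0] sig_le_0 by simp
  next
    case False
    then have i: "2 \<le> Suc k" "Suc k \<le> n"
      using Suc.prems by auto
    have outer: "occupation n \<sigma> (Trans d' k) = pmf (pi_dist n \<sigma>) d' * sig_le \<sigma> k" for d'
      using Suc.IH[of d'] False Suc.prems by simp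
    show ?thesis
    proof (induction "d k" arbitrary: d)
      case 0
      then show ?case
        using occupation_Trans[OF zero_notin_set_pmf i, of d] outer[of d]
        by (simp add: sig_le_Suc algebra_simps)
    next
      case (Suc m)
      have "pass_up n d (Suc k) k = m"
        using pass_up_at_pred[of "Suc k" n d] Suc.hyps(2) by simp
      then have "occupation n \<sigma> (Trans (pass_up n d (Suc k)) (Suc k)) =
          pmf (pi_dist n \<sigma>) (pass_up n d (Suc k)) * sig_le \<sigma> (Suc k)"
        using Suc.hyps(1) by simp
      then have "occupation n \<sigma> (Trans d (Suc k)) = pmf (pi_dist n \<sigma>) d * pmf \<sigma> (Suc k) +
          (1 - 1 / real (Suc k)) * pmf (pi_dist n \<sigma>) (pass_up n d (Suc k)) * sig_le \<sigma> (Suc k)"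
        using occupation_Trans[OF zero_notin_set_pmf i, of d] Suc.hyps(2) by simp
      also have "\<dots> = pmf (pi_dist n \<sigma>) d * sig_le \<sigma> (Suc k)"
        using pmf_pi_dist_pass_up[OF i, of d] Suc.hyps(2) by (simp add: sig_le_Suc algebra_simps)
      finally show ?case .
    qed
  qed
qed

end

theorem lemma7:
  fixes n :: nat and \<sigma> :: "nat pmf" and d :: "nat \<Rightarrow> nat" and i :: nat
  assumes "n \<ge> 1"
    and "set_pmf \<sigma> \<subseteq> {1..n}"
    and "\<forall>j\<in>{1..<n}. sig_le \<sigma> j > real j / real n"
    and "\<forall>j. j \<notin> {1..<n} \<longrightarrow> d j = 0"
    and "i \<in> {1..n}"
  shows "nu n \<sigma> d i = pmf (pi_dist n \<sigma>) d * sig_le \<sigma> i"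
proof -
  interpret admissible_sigma n \<sigma>
    using assms(2,3) by unfold_locales
  show ?thesis
    using nu_eq_occupation[OF zero_notin_set_pmf] occupation_Trans_eq assms(5) by simp
qed

end
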